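(* Let $k$ and $m$ be positive integers. Then \[ E^{(k)}_{2m}\!\left(\tfrac12,\ldots,\tfrac12,\tfrac{k+1}{2}\right)=\sum_{i=0}^{\lfloor k/2\rfloor}\binom{k}{2i}\sum_{j=0}^i\binom{i}{j}(-1)^j E^{(2j)}_{2m}\!\left(\tfrac12,\ldots,\tfrac12\right), \] and \[ E^{(k)}_{2m+1}\!\left(\tfrac12,\ldots,\tfrac12,\tfrac{k+1}{2}\right)=\sum_{i=0}^{\lfloor k/2\rfloor}\binom{k}{2i+1}\sum_{j=0}^i\binom{i}{j}(-1)^{j} E^{(2j+1)}_{2m+1}\!\left(\tfrac12,\ldots,\tfrac12,1\right). \] Here on the left there are $k-1$ arguments equal to $\tfrac12$ followed by $\tfrac{k+1}{2}$; $E^{(2j)}_{2m}(\tfrac12,\ldots,\tfrac12)$ has all $2j$ arguments equal to $\tfrac12$; and $E^{(2j+1)}_{2m+1}(\tfrac12,\ldots,\tfrac12,1)$ has $2j$ arguments equal to $\tfrac12$ followed by $1$.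
   Context: The Euler polynomials $E_n(x)$ are defined by $\sum_{n\ge0}E_n(x)\frac{t^n}{n!}=\frac{2e^{xt}}{e^t+1}$. For $r\ge 0$ and $m\ge 0$, $E^{(r)}_m(x_1,\ldots,x_r)=\sum_{i_1+\cdots+i_r=m}\binom{m}{i_1,\ldots,i_r}E_{i_1}(x_1)\cdots E_{i_r}(x_r)$, the sum over nonnegative integers $i_1,\dots,i_r$; for $r=0$ this is the empty-product convention $E^{(0)}_m=1$ if $m=0$ and $0$ otherwise. *)

theory Defs
  imports "HOL-Computational_Algebra.Formal_Power_Series"
begin

definition euler_poly :: "nat \<Rightarrow> real \<Rightarrow> real" where
  "euler_poly n x = fact n * fps_nth (fps_const 2 * fps_exp x / (fps_exp 1 + 1)) n"

definition euler_multi :: "nat \<Rightarrow> real list \<Rightarrow> real" where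
  "euler_multi m xs =
     (\<Sum>i\<in>{i \<in> {..<length xs} \<rightarrow>\<^sub>E {..m}. sum i {..<length xs} = m}.
        (fact m / (\<Prod>j<length xs. fact (i j))) * (\<Prod>j<length xs. euler_poly (i j) (xs ! j)))"

end

theory Submission
  imports Defs
begin

(* Write T = tanh(t/2) = (e^t - 1)/(e^t + 1).  The generating function of E_n(x) is
   e^(xt) 2/(e^t + 1) = e^(xt) (1 - T), so that of E^(r)_n(x_1, ..., x_r) is
   e^((x_1 + ... + x_r) t) (1 - T)^r.  Since e^t (1 - T) = 1 + T, the left-hand side has
   generating function (1 + T)^k, the series E^(2j)(1/2, ..., 1/2) has (1 - T^2)^j and
   E^(2j+1)(1/2, ..., 1/2, 1) has (1 - T^2)^j (1 + T).  Expanding (1 + T)^k binomially and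
   T^(2i) = (1 - (1 - T^2))^i gives both identities, because T is odd: in the coefficient
   of t^n only the powers T^l with l of the parity of n survive. *)

unbundle fps_syntax

lemma fps_prod_nth_PiE:
  fixes a :: "nat \<Rightarrow> 'a::comm_ring_1 fps"
  shows "(\<Prod>j<L. a j) $ n =
    (\<Sum>i\<in>{i \<in> {..<L} \<rightarrow>\<^sub>E {..n}. sum i {..<L} = n}. \<Prod>j<L. a j $ i j)"
proof (cases L)
  case 0
  then show ?thesis by (auto simp: PiE_empty_domain)
next
  case (Suc m)
  have "(\<Prod>j<L. a j) $ n = (\<Sum>v\<in>natpermute n L. \<Prod>j<L. a j $ (v ! j))"
    using fps_prod_nth[of a m n] by (simp add: Suc atLeast0AtMost lessThan_Suc_atMost)
  also have "\<dots> = (\<Sum>i\<in>{i \<in> {..<L} \<rightarrow>\<^sub>E {..n}. sum i {..<L} = n}. \<Prod>j<L. a j $ i j)"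
  proof (rule sum.reindex_bij_witness[where i = "\<lambda>i. map i [0..<L]"
        and j = "\<lambda>v. restrict (nth v) {..<L}"])
    fix v assume "v \<in> natpermute n L"
    then have len: "length v = L" and sum_v: "sum_list v = n" by (auto simp: natpermute_def)
    show "map (restrict (nth v) {..<L}) [0..<L] = v"
      using len by (intro nth_equalityI) auto
    have "v ! j \<le> n" if "j < L" for j
      using elem_le_sum_list[of j v] len sum_v that by simp
    moreover have "sum (nth v) {..<L} = n"
      using sum_v len by (simp add: sum_list_sum_nth atLeast0LessThan)
    ultimately show
      "restrict (nth v) {..<L} \<in> {i \<in> {..<L} \<rightarrow>\<^sub>E {..n}. sum i {..<L} = n}"
      by auto
    show "(\<Prod>j<L. a j $ restrict (nth v) {..<L} j) = (\<Prod>j<L. a j $ (v ! j))"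
      by simp
  next
    fix i assume i: "i \<in> {i \<in> {..<L} \<rightarrow>\<^sub>E {..n}. sum i {..<L} = n}"
    then show "restrict (nth (map i [0..<L])) {..<L} = i"
      by (auto simp: PiE_def extensional_def restrict_def fun_eq_iff)
    show "map i [0..<L] \<in> natpermute n L"
      using i by (simp add: natpermute_def sum_list_sum_nth atLeast0LessThan)
  qed
  finally show ?thesis .
qed

definition euler_gf :: "real \<Rightarrow> real fps" where
  "euler_gf x = fps_const 2 * fps_exp x / (fps_exp 1 + 1)"

lemma euler_poly_eq_fact_nth: "euler_poly n x = fact n * euler_gf x $ n"
  by (simp add: euler_poly_def euler_gf_def)

lemma euler_multi_eq_prod_euler_gf:
  "euler_multi n xs = fact n * (\<Prod>x\<leftarrow>xs. euler_gf x) $ n"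
proof -
  define L where "L = length xs"
  have "euler_multi n xs =
    (\<Sum>i\<in>{i \<in> {..<L} \<rightarrow>\<^sub>E {..n}. sum i {..<L} = n}.
       fact n * (\<Prod>j<L. euler_gf (xs ! j) $ i j))"
    unfolding euler_multi_def L_def[symmetric]
  proof (rule sum.cong[OF refl])
    fix i :: "nat \<Rightarrow> nat"
    have "(0::real) < (\<Prod>j<L. fact (i j))" by (rule prod_pos) auto
    then show "fact n / (\<Prod>j<L. fact (i j)) * (\<Prod>j<L. euler_poly (i j) (xs ! j)) =
        fact n * (\<Prod>j<L. euler_gf (xs ! j) $ i j)"
      by (simp add: euler_poly_eq_fact_nth prod.distrib)
  qed
  also have "\<dots> = fact n * (\<Prod>j<L. euler_gf (xs ! j)) $ n"
    by (simp add: fps_prod_nth_PiE sum_distrib_left)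
  also have "(\<Prod>j<L. euler_gf (xs ! j)) = (\<Prod>x\<leftarrow>xs. euler_gf x)"
    by (simp add: L_def prod.list_conv_set_nth atLeast0LessThan)
  finally show ?thesis .
qed

definition fps_tanh_half :: "'a::field_char_0 fps" where
  "fps_tanh_half = (fps_exp 1 - 1) * inverse (fps_exp 1 + 1)"

lemma inverse_fps_exp_one_plus_one:
  "inverse (fps_exp 1 + 1) * (fps_exp 1 + 1) = (1 :: 'a::field_char_0 fps)"
  by (rule inverse_mult_eq_1) simp

lemma one_minus_fps_tanh_half:
  "1 - fps_tanh_half = 2 * inverse (fps_exp 1 + 1 :: 'a::field_char_0 fps)"
proof -
  let ?u = "inverse (fps_exp 1 + 1 :: 'a fps)"
  have "1 - fps_tanh_half = ?u * (fps_exp 1 + 1) - (fps_exp 1 - 1) * ?u"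
    by (simp only: inverse_fps_exp_one_plus_one fps_tanh_half_def)
  also have "\<dots> = 2 * ?u"
    by (simp add: algebra_simps)
  finally show ?thesis .
qed

lemma fps_exp_mult_one_minus_tanh_half:
  "fps_exp 1 * (1 - fps_tanh_half) = (1 + fps_tanh_half :: 'a::field_char_0 fps)"
proof -
  let ?u = "inverse (fps_exp 1 + 1 :: 'a fps)"
  have "1 + fps_tanh_half = ?u * (fps_exp 1 + 1) + (fps_exp 1 - 1) * ?u"
    by (simp only: inverse_fps_exp_one_plus_one fps_tanh_half_def)
  also have "\<dots> = fps_exp 1 * (2 * ?u)"
    by (simp add: algebra_simps)
  finally show ?thesis
    by (simp add: one_minus_fps_tanh_half)
qed

lemma fps_tanh_half_compose_uminus:
  "fps_tanh_half oo -fps_X = - (fps_tanh_half :: 'a::field_char_0 fps)"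
proof -
  let ?E = "fps_exp 1 :: 'a fps" and ?E' = "fps_exp (-1) :: 'a fps"
  let ?u = "inverse (?E + 1)"
  have E_E': "?E * ?E' = 1"
    by (simp flip: fps_exp_add_mult)
  have "(?E' + 1) * (?E * ?u) = ?u * (?E * ?E' + ?E)"
    by (simp add: algebra_simps)
  also have "\<dots> = 1"
    by (simp only: E_E' add.commute[of 1] inverse_fps_exp_one_plus_one)
  finally have inverse_E': "inverse (?E' + 1) = ?E * ?u"
    by (rule fps_inverse_unique)
  have "fps_tanh_half oo -fps_X = (?E' - 1) * inverse (?E' + 1)"
    by (simp add: fps_tanh_half_def fps_compose_mult_distrib fps_compose_sub_distrib
        fps_compose_add_distrib fps_inverse_compose)
  also have "\<dots> = (?E * ?E' - ?E) * ?u"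
    unfolding inverse_E' by (simp add: algebra_simps)
  also have "\<dots> = - fps_tanh_half"
    by (simp add: E_E' fps_tanh_half_def algebra_simps)
  finally show ?thesis .
qed

lemma fps_exp_of_nat_mult_power_one_minus_tanh_half:
  "fps_exp (of_nat n) * (1 - fps_tanh_half) ^ n =
    (1 + fps_tanh_half :: 'a::field_char_0 fps) ^ n"
proof -
  have "fps_exp (of_nat n) = (fps_exp 1 :: 'a fps) ^ n"
    by (simp add: fps_exp_power_mult)
  then show ?thesis
    by (simp add: fps_exp_mult_one_minus_tanh_half flip: power_mult_distrib)
qed

lemma fps_exp_of_nat_mult_power_double_one_minus_tanh_half:
  "fps_exp (of_nat n) * (1 - fps_tanh_half) ^ (2*n) =
    (1 - fps_tanh_half^2 :: 'a::field_char_0 fps) ^ n"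
proof -
  have "fps_exp (of_nat n) * (1 - fps_tanh_half) ^ (2*n) =
      ((1 + fps_tanh_half) * (1 - fps_tanh_half :: 'a fps)) ^ n"
    by (simp add: power_mult_distrib mult_2 power_add fps_exp_of_nat_mult_power_one_minus_tanh_half
        flip: mult.assoc)
  then show ?thesis
    by (simp add: power2_eq_square algebra_simps)
qed

lemma euler_gf_eq_fps_exp_mult: "euler_gf x = fps_exp x * (1 - fps_tanh_half)"
  by (simp add: euler_gf_def one_minus_fps_tanh_half fps_divide_unit
      fps_numeral_fps_const[symmetric] ac_simps)

lemma euler_multi_eq_fps_exp_mult_power:
  "euler_multi n xs = fact n * (fps_exp (sum_list xs) * (1 - fps_tanh_half) ^ length xs) $ n"
proof -
  have "(\<Prod>x\<leftarrow>xs. euler_gf x) = fps_exp (sum_list xs) * (1 - fps_tanh_half) ^ length xs"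
    by (induction xs) (simp_all add: euler_gf_eq_fps_exp_mult fps_exp_add_mult ac_simps)
  then show ?thesis
    by (simp add: euler_multi_eq_prod_euler_gf)
qed

lemma euler_multi_halves_last:
  assumes "k \<ge> 1"
  shows "euler_multi n (replicate (k - 1) (1/2) @ [(real k + 1) / 2]) =
    fact n * ((1 + fps_tanh_half) ^ k) $ n"
proof -
  have "sum_list (replicate (k - 1) (1/2) @ [(real k + 1) / 2]) = real k"
    using assms by (simp add: sum_list_replicate of_nat_diff field_simps)
  then show ?thesis
    using assms
    by (simp add: euler_multi_eq_fps_exp_mult_power fps_exp_of_nat_mult_power_one_minus_tanh_half)
qed

lemma euler_multi_halves:
  "euler_multi n (replicate (2*j) (1/2)) = fact n * ((1 - fps_tanh_half^2) ^ j) $ n"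
  by (simp add: euler_multi_eq_fps_exp_mult_power sum_list_replicate
      fps_exp_of_nat_mult_power_double_one_minus_tanh_half)

lemma euler_multi_halves_one:
  "euler_multi n (replicate (2*j) (1/2) @ [1]) =
    fact n * ((1 - fps_tanh_half^2) ^ j * (1 + fps_tanh_half)) $ n"
proof -
  let ?T = "fps_tanh_half :: real fps" and ?xs = "replicate (2*j) (1/2) @ [1::real]"
  have "fps_exp (sum_list ?xs) * (1 - ?T) ^ length ?xs =
      (fps_exp (of_nat j) * (1 - ?T) ^ (2*j)) * (fps_exp 1 * (1 - ?T))"
    by (simp add: sum_list_replicate fps_exp_add_mult ac_simps)
  then show ?thesis
    by (simp only: euler_multi_eq_fps_exp_mult_power fps_exp_mult_one_minus_tanh_half
        fps_exp_of_nat_mult_power_double_one_minus_tanh_half)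
qed

lemma fps_nth_power_eq_0_if_odd_series:
  fixes S :: "'a::field_char_0 fps"
  assumes odd_S: "S oo -fps_X = -S" and "odd (n + j)"
  shows "(S ^ n) $ j = 0"
proof -
  have "(-S) ^ n = S ^ n oo -fps_X"
    using fps_compose_power[of "-fps_X" S n] by (simp add: odd_S)
  then have "(-1) ^ j * (S ^ n) $ j = ((-S) ^ n) $ j"
    by (simp add: fps_compose_uminus')
  also have "\<dots> = (-1) ^ n * (S ^ n) $ j"
    by (cases "even n") simp_all
  finally show ?thesis
    using \<open>odd (n + j)\<close> by (cases "even n") auto
qed

lemma one_plus_power_eq_sum_even_odd:
  fixes S :: "'a::comm_semiring_1"
  shows "(1 + S) ^ k = (\<Sum>i\<le>k div 2.
    of_nat (k choose (2*i)) * S ^ (2*i) + of_nat (k choose (2*i+1)) * S ^ (2*i+1))"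
proof -
  have "(1 + S) ^ k = (\<Sum>n\<le>k. of_nat (k choose n) * S ^ n)"
    by (simp add: binomial_ring add.commute[of 1])
  also have "\<dots> = (\<Sum>n\<le>Suc (2 * (k div 2)). of_nat (k choose n) * S ^ n)"
    by (rule sum.mono_neutral_left) (auto simp: binomial_eq_0)
  also have "\<dots> = (\<Sum>i\<le>k div 2.
      of_nat (k choose (2*i)) * S ^ (2*i) + of_nat (k choose (2*i+1)) * S ^ (2*i+1))"
    by (subst sum.in_pairs_0) (simp only: Suc_eq_plus1)
  finally show ?thesis .
qed

lemma fps_nth_one_plus_power_even:
  fixes S :: "'a::field_char_0 fps"
  assumes odd_S: "S oo -fps_X = -S"
  shows "((1 + S) ^ k) $ (2*m) = (\<Sum>i\<le>k div 2. of_nat (k choose (2*i)) * (S ^ (2*i)) $ (2*m))"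
proof -
  have "(S ^ (2*i+1)) $ (2*m) = 0" for i
    by (rule fps_nth_power_eq_0_if_odd_series[OF odd_S]) simp
  then show ?thesis
    unfolding one_plus_power_eq_sum_even_odd fps_sum_nth fps_add_nth
    by (simp del: power_Suc add: fps_of_nat[symmetric])
qed

lemma fps_nth_one_plus_power_odd:
  fixes S :: "'a::field_char_0 fps"
  assumes odd_S: "S oo -fps_X = -S"
  shows "((1 + S) ^ k) $ (2*m+1) =
    (\<Sum>i\<le>k div 2. of_nat (k choose (2*i+1)) * (S ^ (2*i) * (1 + S)) $ (2*m+1))"
proof -
  have "(S ^ (2*i)) $ (2*m+1) = 0" for i
    by (rule fps_nth_power_eq_0_if_odd_series[OF odd_S]) simp
  then show ?thesis
    unfolding one_plus_power_eq_sum_even_odd fps_sum_nth fps_add_nth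
    by (simp del: power_Suc add: fps_of_nat[symmetric] distrib_left power_Suc2[symmetric])
qed

lemma fps_nth_even_power_mult:
  fixes S g :: "'a::comm_ring_1 fps"
  shows "(S ^ (2*i) * g) $ n =
    (\<Sum>j\<le>i. of_nat (i choose j) * (-1) ^ j * ((1 - S^2) ^ j * g) $ n)"
proof -
  define P where "P = 1 - S^2"
  have "S ^ (2*i) = (-P + 1) ^ i"
    by (simp add: P_def power_mult)
  also have "\<dots> = (\<Sum>j\<le>i. of_nat (i choose j) * (-P) ^ j)"
    by (simp only: binomial_ring power_one mult_1_right)
  also have "\<dots> = (\<Sum>j\<le>i. fps_const (of_nat (i choose j) * (-1) ^ j) * P ^ j)"
    by (simp add: power_minus[of P] fps_of_nat mult.assoc
        flip: fps_const_mult fps_const_power fps_const_neg)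
  finally show ?thesis
    by (simp add: P_def fps_sum_nth sum_distrib_right mult.assoc)
qed

theorem mainTheorem5:
  fixes k m :: nat
  assumes "k \<ge> 1" and "m \<ge> 1"
  shows "euler_multi (2*m) (replicate (k - 1) (1/2) @ [(real k + 1) / 2]) =
           (\<Sum>i\<le>k div 2. real (k choose (2*i)) *
              (\<Sum>j\<le>i. real (i choose j) * (-1)^j * euler_multi (2*m) (replicate (2*j) (1/2))))
       \<and> euler_multi (2*m+1) (replicate (k - 1) (1/2) @ [(real k + 1) / 2]) =
           (\<Sum>i\<le>k div 2. real (k choose (2*i+1)) *
              (\<Sum>j\<le>i. real (i choose j) * (-1)^j * euler_multi (2*m+1) (replicate (2*j) (1/2) @ [1])))"
proof -
  let ?T = "fps_tanh_half :: real fps"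
  have inner_even: "(\<Sum>j\<le>i. real (i choose j) * (-1)^j * euler_multi n (replicate (2*j) (1/2))) =
      fact n * (?T ^ (2*i)) $ n" for i n
    using fps_nth_even_power_mult[of ?T i 1 n]
    unfolding euler_multi_halves by (simp add: sum_distrib_left ac_simps)
  have inner_odd: "(\<Sum>j\<le>i. real (i choose j) * (-1)^j * euler_multi n (replicate (2*j) (1/2) @ [1])) =
      fact n * (?T ^ (2*i) * (1 + ?T)) $ n" for i n
    using fps_nth_even_power_mult[of ?T i "1 + ?T" n]
    unfolding euler_multi_halves_one by (simp add: sum_distrib_left ac_simps)
  show ?thesis
    unfolding inner_even inner_odd euler_multi_halves_last[OF assms(1)]
      fps_nth_one_plus_power_even[OF fps_tanh_half_compose_uminus]
      fps_nth_one_plus_power_odd[OF fps_tanh_half_compose_uminus]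
    by (simp add: sum_distrib_left ac_simps)
qed

end
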